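(* In the group \(\mathcal{G}\) described below, let \(i,j,k,l\in\{1,\dots,7\}\) be four points of the Fano plane no three of which are collinear. Then \(s_is_j=s_ks_l\).
   Context: Let \(\mathcal{G}=\langle x,y,t \mid x^7, y^2, (xy)^3, [x,y]^4, t^2, [t^{x^2},yx^{-1}], [t,y], (yt^{x^2})^5, (xyx^2t^x)^5, (xt)^8\rangle\), with \(a^g=g^{-1}ag\), \([a,b]=a^{-1}b^{-1}ab\). Let \(\mathcal{N}=\langle x,y\rangle\le\mathcal{G}\); it acts on \(\{1,\dots,14\}\) on the right via \(x\mapsto(1,2,3,4,5,6,7)(8,9,10,11,12,13,14)\), \(y\mapsto(1,12)(2,3)(4,11)(5,8)(6,13)(9,10)\). Put \(t_7=t\) and \(t_i=t^g\) for any \(g\in\mathcal{N}\) mapping \(7\) to \(i\); indices are taken modulo 14, and \(s_i=t_it_{i+7}\). The Fano plane has points \(1,\dots,7\) and lines \(\{7,1,5\},\{1,2,6\},\{2,3,7\},\{3,4,1\},\{4,5,2\},\{5,6,3\},\{6,7,4\}\). *)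

theory Defs
  imports Main
begin

datatype gen = GX | GY | GT

text \<open>A letter is (inverted?, generator); a word is a list of letters.\<close>
type_synonym word = "(bool \<times> gen) list"

definition inv_letter :: "bool \<times> gen \<Rightarrow> bool \<times> gen" where
  "inv_letter a = (\<not> fst a, snd a)"

definition winv :: "word \<Rightarrow> word" where
  "winv w = rev (map inv_letter w)"

definition wpow :: "word \<Rightarrow> nat \<Rightarrow> word" where
  "wpow w n = concat (replicate n w)"

definition wconj :: "word \<Rightarrow> word \<Rightarrow> word" where
  "wconj a g = winv g @ a @ g"

definition wcomm :: "word \<Rightarrow> word \<Rightarrow> word" where
  "wcomm a b = winv a @ winv b @ a @ b"

definition wx :: word where "wx = [(False, GX)]"
definition wy :: word where "wy = [(False, GY)]"
definition wt :: word where "wt = [(False, GT)]"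

definition relators :: "word set" where
  "relators =
    { wpow wx 7, wpow wy 2, wpow (wx @ wy) 3, wpow (wcomm wx wy) 4, wpow wt 2,
      wcomm (wconj wt (wpow wx 2)) (wy @ winv wx),
      wcomm wt wy,
      wpow (wy @ wconj wt (wpow wx 2)) 5,
      wpow (wx @ wy @ wpow wx 2 @ wconj wt wx) 5,
      wpow (wx @ wt) 8 }"

inductive G_eq :: "word \<Rightarrow> word \<Rightarrow> bool" where
  G_refl: "G_eq u u"
| G_sym: "G_eq u v \<Longrightarrow> G_eq v u"
| G_trans: "G_eq u v \<Longrightarrow> G_eq v w \<Longrightarrow> G_eq u w"
| G_cancel: "G_eq (u @ [a, inv_letter a] @ v) (u @ v)"
| G_rel: "r \<in> relators \<Longrightarrow> G_eq (u @ r @ v) (u @ v)"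

definition perm_x :: "nat \<Rightarrow> nat" where
  "perm_x p = (if p \<in> {1..6} \<or> p \<in> {8..13} then p + 1
               else if p = 7 then 1 else if p = 14 then 8 else p)"

definition perm_x_inv :: "nat \<Rightarrow> nat" where
  "perm_x_inv p = (if p \<in> {2..7} \<or> p \<in> {9..14} then p - 1
                   else if p = 1 then 7 else if p = 8 then 14 else p)"

definition perm_y :: "nat \<Rightarrow> nat" where
  "perm_y p = (if p = 1 then 12 else if p = 12 then 1
          else if p = 2 then 3 else if p = 3 then 2
          else if p = 4 then 11 else if p = 11 then 4
          else if p = 5 then 8 else if p = 8 then 5
          else if p = 6 then 13 else if p = 13 then 6
          else if p = 9 then 10 else if p = 10 then 9 else p)"

definition act_letter :: "bool \<times> gen \<Rightarrow> nat \<Rightarrow> nat" where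
  "act_letter a p = (case a of
      (False, GX) \<Rightarrow> perm_x p
    | (True, GX) \<Rightarrow> perm_x_inv p
    | (_, GY) \<Rightarrow> perm_y p
    | (_, GT) \<Rightarrow> p)"

text \<open>Right action: the image of point p under the word w, letters applied left to right.\<close>
fun act :: "word \<Rightarrow> nat \<Rightarrow> nat" where
  "act [] p = p"
| "act (a # w) p = act w (act_letter a p)"

definition in_N :: "word \<Rightarrow> bool" where
  "in_N w \<longleftrightarrow> (\<forall>a \<in> set w. snd a \<noteq> GT)"

text \<open>w is a word representing t_i, i.e. t^g for some g in N mapping 7 to i.\<close>
definition is_t :: "nat \<Rightarrow> word \<Rightarrow> bool" where
  "is_t i w \<longleftrightarrow> (\<exists>g. in_N g \<and> act g 7 = i \<and> w = wconj wt g)"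

definition fano_lines :: "nat set set" where
  "fano_lines = {{7,1,5},{1,2,6},{2,3,7},{3,4,1},{4,5,2},{5,6,3},{6,7,4}}"

definition collinear :: "nat \<Rightarrow> nat \<Rightarrow> nat \<Rightarrow> bool" where
  "collinear a b c \<longleftrightarrow> (\<exists>L \<in> fano_lines. {a, b, c} \<subseteq> L)"

end

theory Submission
  imports Defs
begin

(* N = <x, y> is PSL(2,7) acting faithfully on 14 points.  A coset enumeration over the
   stabiliser A4 of the point 7, whose table entries are certified by free reduction against
   consequences of the relators, shows that a word in x, y is determined in G by its
   permutation.  As t commutes with that stabiliser, t_i = t^g depends only on i = 7g, and
   conjugation by N permutes the t_i like the points.  A relation t_(W_1) ... t_(W_k) = pi with
   pi in N is therefore encoded by W and the permutation of pi, and new relations are derived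
   mechanically from the relators (y t^(x^2))^5 and (x y x^2 t^x)^5 by conjugating, rotating and
   substituting.  Two such derivations give t_7 t_14 t_7 t_14 = 1 and t_1 t_8 t_5 t_12 t_14 t_7 = 1:
   the s_p are involutions and s_1 s_5 = s_7, hence s_a s_b = s_c on every Fano line after
   conjugating by powers of x.  For four points in general position the lines ij and kl meet in
   a point c, so s_i s_j = s_c = s_k s_l. *)

section \<open>Conjugation and involutions in groups\<close>

text \<open>Keeping \<open>- a + - b\<close> in additive form lets \<open>add.assoc\<close> normalise group words.\<close>

declare add_uminus_conv_diff [simp del]

lemma commute_conjugate:
  fixes a b g :: "'a::group_add"
  assumes "(- g + a + g) + b = b + (- g + a + g)"
  shows "a + (g + b + - g) = (g + b + - g) + a"
proof -
  have "a + (g + b + - g) = g + ((- g + a + g) + b) + - g"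
    by (simp add: add.assoc)
  also have "\<dots> = g + (b + (- g + a + g)) + - g"
    by (simp only: assms)
  also have "\<dots> = (g + b + - g) + a"
    by (simp add: add.assoc)
  finally show ?thesis .
qed

lemma commute_if_involutions:
  fixes a b :: "'a::group_add"
  assumes "a + a = 0" "b + b = 0" "(a + b) + (a + b) = 0"
  shows "a + b = b + a"
proof -
  have "a + b = - (a + b)" using assms(3) by (simp add: eq_neg_iff_add_eq_0)
  also have "\<dots> = b + a"
    by (simp add: minus_add minus_unique[OF assms(1)] minus_unique[OF assms(2)])
  finally show ?thesis .
qed

lemma sum_commuting_involutions:
  fixes a b :: "'a::group_add"
  assumes "a + a = 0" "b + b = 0" "a + b = b + a"
  shows "(a + b) + (a + b) = 0"
  by (metis add.assoc add_0_left assms)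

lemma involutions_relation_sym:
  fixes a b c :: "'a::group_add"
  assumes "a + a = 0" "b + b = 0" "c + c = 0" "a + b = c"
  shows "b + a = c" "a + c = b"
proof -
  have "- (a + b) = b + a"
    by (simp add: minus_add minus_unique[OF assms(1)] minus_unique[OF assms(2)])
  moreover have "- c = c" using assms(3) by (rule minus_unique)
  ultimately show "b + a = c" using assms(4) by simp
  show "a + c = b" using assms(1,4) by (metis add.assoc add_0_left)
qed

section \<open>The group G as a quotient of the free monoid on letters\<close>

lemma inv_letter_inv_letter [simp]: "inv_letter (inv_letter a) = a"
  by (simp add: inv_letter_def)

lemma winv_Nil [simp]: "winv [] = []"
  and winv_Cons [simp]: "winv (a # w) = winv w @ [inv_letter a]"
  and winv_append [simp]: "winv (u @ v) = winv v @ winv u"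
  and winv_winv [simp]: "winv (winv w) = w"
  by (simp_all add: winv_def rev_map comp_def)

lemma G_eq_append_left: "G_eq u v \<Longrightarrow> G_eq (w @ u) (w @ v)"
proof (induction rule: G_eq.induct)
  case (G_sym u v)
  from G_sym.IH show ?case by (rule G_eq.G_sym)
next
  case (G_trans u v x)
  from G_trans.IH show ?case by (rule G_eq.G_trans)
next
  case (G_cancel u a v)
  show ?case using G_eq.G_cancel[of "w @ u" a v] by simp
next
  case (G_rel r u v)
  then show ?case using G_eq.G_rel[of r "w @ u" v] by simp
qed (rule G_eq.G_refl)

lemma G_eq_append_right: "G_eq u v \<Longrightarrow> G_eq (u @ w) (v @ w)"
proof (induction rule: G_eq.induct)
  case (G_sym u v)
  from G_sym.IH show ?case by (rule G_eq.G_sym)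
next
  case (G_trans u v x)
  from G_trans.IH show ?case by (rule G_eq.G_trans)
next
  case (G_cancel u a v)
  show ?case using G_eq.G_cancel[of u a "v @ w"] by simp
next
  case (G_rel r u v)
  then show ?case using G_eq.G_rel[of r u "v @ w"] by simp
qed (rule G_eq.G_refl)

lemma G_eq_append: "G_eq u v \<Longrightarrow> G_eq u' v' \<Longrightarrow> G_eq (u @ u') (v @ v')"
  by (meson G_eq.G_trans G_eq_append_left G_eq_append_right)

lemma G_eq_winv_append: "G_eq (winv w @ w) []"
proof (induction w)
  case Nil
  show ?case by (simp add: G_eq.G_refl)
next
  case (Cons a w)
  have "G_eq (winv w @ [inv_letter a, inv_letter (inv_letter a)] @ w) (winv w @ w)"
    by (rule G_eq.G_cancel)
  with Cons show ?case by (simp add: G_eq.G_trans)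
qed

lemma G_eq_winv: "G_eq u v \<Longrightarrow> G_eq (winv u) (winv v)"
proof -
  assume "G_eq u v"
  then have "G_eq (winv u @ v @ winv v) (winv u @ u @ winv v)"
    by (intro G_eq_append_left G_eq_append_right) (rule G_eq.G_sym)
  moreover have "G_eq (winv u @ v @ winv v) (winv u)"
    using G_eq_append_left[OF G_eq_winv_append[of "winv v"], of "winv u"] by simp
  moreover have "G_eq (winv u @ u @ winv v) (winv v)"
    using G_eq_append_right[OF G_eq_winv_append[of u], of "winv v"] by simp
  ultimately show ?thesis by (meson G_eq.G_sym G_eq.G_trans)
qed

quotient_type gr = word / G_eq
  by (rule equivpI) (auto simp: reflp_def symp_def transp_def intro: G_eq.intros)

instantiation gr :: group_add
begin
lift_definition zero_gr :: gr is "[]" .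
lift_definition plus_gr :: "gr \<Rightarrow> gr \<Rightarrow> gr" is "(@)" by (rule G_eq_append)
lift_definition uminus_gr :: "gr \<Rightarrow> gr" is winv by (rule G_eq_winv)
lift_definition minus_gr :: "gr \<Rightarrow> gr \<Rightarrow> gr" is "\<lambda>u v. u @ winv v"
  by (intro G_eq_append G_eq_winv)
instance
proof
  fix a b c :: gr
  show "a + b + c = a + (b + c)" by transfer (simp add: G_eq.G_refl)
  show "0 + a = a" by transfer (simp add: G_eq.G_refl)
  show "a + 0 = a" by transfer (simp add: G_eq.G_refl)
  show "- a + a = 0" by transfer (rule G_eq_winv_append)
  show "a + - b = a - b" by transfer (simp add: G_eq.G_refl)
qed
end

definition elem :: "word \<Rightarrow> gr" where
  "elem = abs_gr"

lemma elem_eq_iff: "elem u = elem v \<longleftrightarrow> G_eq u v"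
  by (simp add: elem_def gr.abs_eq_iff)

lemma elem_Nil [simp]: "elem [] = 0"
  and elem_append [simp]: "elem (u @ v) = elem u + elem v"
  and elem_winv [simp]: "elem (winv w) = - elem w"
  by (simp_all add: elem_def zero_gr.abs_eq plus_gr.abs_eq uminus_gr.abs_eq)

lemma elem_eq_zero_iff: "elem w = 0 \<longleftrightarrow> G_eq w []"
  using elem_eq_iff[of w "[]"] by simp

lemma elem_relator: "r \<in> relators \<Longrightarrow> elem r = 0"
  using G_eq.G_rel[of r "[]" "[]"] by (simp add: elem_eq_zero_iff)

lemma elem_wconj: "elem (wconj a g) = - elem g + elem a + elem g"
  by (simp add: wconj_def add.assoc)

lemma commute_if_elem_wcomm: "elem (wcomm a b) = 0 \<Longrightarrow> elem a + elem b = elem b + elem a"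
proof -
  assume "elem (wcomm a b) = 0"
  then have "- elem a + (- elem b + (elem a + elem b)) = 0"
    by (simp add: wcomm_def add.assoc)
  then have "- elem b + (elem a + elem b) = elem a"
    by (metis add.right_neutral add_minus_cancel)
  then show ?thesis
    by (metis add_minus_cancel)
qed

section \<open>Relations certified by free reduction\<close>

fun reduce_acc :: "word \<Rightarrow> word \<Rightarrow> word" where
  "reduce_acc acc [] = rev acc"
| "reduce_acc [] (a # w) = reduce_acc [a] w"
| "reduce_acc (b # acc) (a # w) =
     (if b = inv_letter a then reduce_acc acc w else reduce_acc (a # b # acc) w)"

definition reduce :: "word \<Rightarrow> word" where
  "reduce w = reduce_acc [] w"

lemma G_eq_reduce_acc: "G_eq (rev acc @ w) (reduce_acc acc w)"
proof (induction acc w rule: reduce_acc.induct)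
  case (3 b acc a w)
  have "G_eq (rev acc @ [inv_letter a, inv_letter (inv_letter a)] @ w) (rev acc @ w)"
    by (rule G_eq.G_cancel)
  with 3 show ?case by (auto simp: G_eq.G_trans)
qed (simp_all add: G_eq.G_refl)

lemma G_eq_reduce: "G_eq w (reduce w)"
  using G_eq_reduce_acc[of "[]" w] by (simp add: reduce_def)

lemma elem_reduce [simp]: "elem (reduce w) = elem w"
  using G_eq_reduce by (metis elem_eq_iff)

text \<open>A certificate entry \<open>(w, cs)\<close> claims that \<open>w\<close> reduces freely to a product of conjugates
  of previously known relations or their inverses; it is then itself a known relation.  The
  indices in \<open>cs\<close> refer to \<open>relator_list\<close> followed by the earlier entries.\<close>

definition conjugate_piece :: "word list \<Rightarrow> word \<times> nat \<times> bool \<Rightarrow> word" where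
  "conjugate_piece K c = (case c of (g, i, s) \<Rightarrow> winv g @ (if s then K ! i else winv (K ! i)) @ g)"

fun certified :: "word list \<Rightarrow> (word \<times> (word \<times> nat \<times> bool) list) list \<Rightarrow> bool" where
  "certified K [] = True"
| "certified K ((w, cs) # rest) \<longleftrightarrow>
     (\<forall>c \<in> set cs. fst (snd c) < length K) \<and>
     reduce w = reduce (concat (map (conjugate_piece K) cs)) \<and> certified (K @ [w]) rest"

lemma elem_concat_zero: "\<forall>u \<in> set us. elem u = 0 \<Longrightarrow> elem (concat us) = 0"
  by (induction us) simp_all

lemma certified_trivial:
  "certified K L \<Longrightarrow> \<forall>k \<in> set K. elem k = 0 \<Longrightarrow> \<forall>x \<in> set L. elem (fst x) = 0"
proof (induction K L rule: certified.induct)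
  case (2 K w cs rest)
  have "elem (conjugate_piece K c) = 0" if "c \<in> set cs" for c
    using that 2(2,3) by (auto simp: conjugate_piece_def split: prod.splits)
  then have "elem (concat (map (conjugate_piece K) cs)) = 0"
    by (intro elem_concat_zero) auto
  then have "elem w = 0"
    using 2(2) by (metis certified.simps(2) elem_reduce)
  with 2 show ?case by simp
qed simp

definition decode :: "char \<Rightarrow> bool \<times> gen" where
  "decode c = (if c = CHR ''x'' then (False, GX) else if c = CHR ''X'' then (True, GX)
     else if c = CHR ''y'' then (False, GY) else if c = CHR ''Y'' then (True, GY)
     else if c = CHR ''t'' then (False, GT) else (True, GT))"

definition decw :: "string \<Rightarrow> word" where
  "decw s = map decode s"

definition relator_list :: "word list" where
  "relator_list = [wpow wx 7, wpow wy 2, wpow (wx @ wy) 3, wpow (wcomm wx wy) 4, wpow wt 2,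
      wcomm (wconj wt (wpow wx 2)) (wy @ winv wx), wcomm wt wy,
      wpow (wy @ wconj wt (wpow wx 2)) 5, wpow (wx @ wy @ wpow wx 2 @ wconj wt wx) 5,
      wpow (wx @ wt) 8]"

definition relator_certificate :: "(string \<times> (string \<times> nat \<times> bool) list) list" where
  "relator_certificate = [(''YY'',[('''',1,False)]),
    (''yy'',[('''',1,True)]),
    (''xxxxxxx'',[('''',0,True)]),
    (''xyxyxy'',[('''',2,True)]),
    (''XyxyXyxyXyxyXyxy'',[(''xYXYxYXYxYXYx'',10,False),(''xYXYxYXYx'',10,False),(''xYXYx'',10,False),(''x'',10,False),('''',3,True)]),
    (''yxyXyxyXyxyXyxyX'',[(''X'',14,True)]),
    (''xxxxxxx'',[(''x'',12,True)]),
    (''yxyxyx'',[(''x'',13,True)]),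
    (''xxxxxxx'',[(''x'',16,True)]),
    (''xxxxxxx'',[(''x'',18,True)]),
    (''XXXXXXX'',[(''x'',19,False)]),
    (''xyXyxyXyxyXyxyXY'',[('''',11,False),(''Y'',15,True)]),
    (''yXyxyXyxyXyxyXYx'',[(''x'',21,True)]),
    (''xyxyxY'',[('''',11,False),(''Y'',17,True)]),
    (''yxyxYx'',[(''x'',23,True)]),
    (''XXyXXXyXXXyXXYxY'',[(''xxYxxxYxx'',24,False),(''xxYxx'',24,False),(''x'',24,False),('''',11,False),(''Y'',22,True)]),
    (''XyXXXyXXXyXXYxYX'',[(''X'',25,True)]),
    (''yXXXyXXXyXXYxYXX'',[(''X'',26,True)]),
    (''yXyXYX'',[(''Y'',24,False),('''',11,True)]),
    (''XXXyXXXyXXYxYXXY'',[('''',11,False),(''Y'',27,True)]),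
    (''XXyXXXyXXYxYXXYX'',[(''X'',29,True)]),
    (''xxyxxyXyxxYxxxYx'',[(''X'',30,False)]),
    (''yXyxXXYX'',[('''',25,False),(''xxYxxxYxx'',24,False),(''xxYxx'',24,False),(''x'',24,False),('''',13,False),(''XYX'',15,True)]),
    (''xxxyXXXyXXXYXXXYx'',[(''XXXX'',31,False),('''',16,True),(''XXYx'',32,True)]),
    (''XXyxxxyxxxYxxxYXX'',[(''x'',33,False)]),
    (''XyXXyXYXXY'',[('''',24,False),('''',23,False),(''YX'',30,False),(''xxYxxYX'',24,False),(''xYX'',24,False),(''xYXYxYXYxYX'',17,False),('''',21,True)]),
    (''yXXyXYXXYX'',[(''X'',35,True)]),
    (''yXyXYX'',[('''',23,False),(''XYX'',11,True)]),
    (''xyxxyxxXYxxY'',[(''XYX'',32,False),('''',23,True)]),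
    (''XyXXXyXXXyxxxyxXXYXXX'',[(''YxxxYxxxYx'',20,False),(''xxYxxxYx'',24,False),(''xxYx'',24,False),('''',24,False),(''xYXYxYXYxYXY'',11,False),(''YxYXYxYXYxYXY'',38,False),('''',15,True)]),
    (''yXXXyXXXyxxxyxXXYxxx'',[(''X'',39,True),('''',19,True)]),
    (''XXXyXXXyxxxyxXXYxxxY'',[('''',11,False),(''Y'',40,True)]),
    (''XXyXXXyxxxyxXXYxxxYX'',[(''X'',41,True)]),
    (''XyXXXyxxxyxXXYxxxYXX'',[(''X'',42,True)]),
    (''yXXXyxxxyxXXYxxxYXXX'',[(''X'',43,True)]),
    (''XyxxyXXXyxxXYXXXYxxY'',[('''',24,False),('''',23,False),(''YXXYXYX'',20,False),(''xYXXYXYX'',11,False),(''YX'',30,False),(''xxYxxYX'',24,False),(''xYX'',24,False),(''YxYXYxYXYxYX'',19,False),(''XYxYXYxYXYxYX'',44,False),('''',21,True)]),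
    (''xyxxyxYxxY'',[(''XYX'',37,False),('''',23,True)]),
    (''xxyxxyXXyxxxyXYXXXY'',[(''X'',36,False),(''YxxxYxxYX'',20,False),(''xxYxxYX'',24,False),(''xYX'',24,False),(''xYXYxYXYxYX'',11,False),(''YxYXYxYXYxYX'',46,False),('''',21,True)]),
    (''xyxxyXXyxxxyXYXXXYx'',[(''x'',47,True)]),
    (''yxxyXXyxxxyXYXXXYxx'',[(''x'',48,True)]),
    (''xxyXXyxxxyXYXXXYxxY'',[('''',11,False),(''Y'',49,True)]),
    (''xxxxxxx'',[('''',12,True)]),
    (''xxxyXXxxxYXXxxxYXX'',[(''XYXXX'',10,True),(''XYXYXXX'',10,True),(''XX'',13,True)]),
    (''XXXyxYXxxxYXXxxxYXX'',[(''XYxxx'',10,True),(''XXYXYxxx'',10,True),(''XYXXYXYxxx'',10,True),(''XYXYxxx'',23,True),(''xxx'',17,True),('''',20,True)]),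
    (''XXyyxx'',[(''xx'',11,True)]),
    (''XXyxxxxYXxxxYXXxxxYXXYxxxYXX'',[(''XXXXYxx'',10,True),(''XXYXXXXYxx'',10,True),(''XYXXYXXXXYxx'',10,True),(''xxYXYXXYXXXXYxx'',10,True),(''XXXYxxYXYXXYXXXXYxx'',10,True),(''Yxx'',19,True),(''XYxxxYxx'',23,True),(''xxxYxx'',24,True),(''Yxx'',20,True),(''YXXXYxx'',20,True),('''',34,True),(''xxxYXX'',11,True),(''XX'',11,True)]),
    (''XXyxyxxYXxxxYXXxxxYXX'',[(''XXYXYxx'',10,True),(''XXYXXYXYxx'',10,True),(''XYXXYXXYXYxx'',10,True),(''XYXXYXYxx'',23,True),(''XYXYxx'',23,True),(''xx'',17,True),('''',20,True)]),
    (''xyXXyXYxxxxxYXX'',[(''xYxxYX'',10,True),(''XXXXXYxYxxYX'',10,True),(''YxYxxYX'',18,True),(''xxYX'',28,True),(''X'',28,True),(''XX'',11,True)]),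
    (''xyXyxxxxxxYXX'',[(''XXXXXXYxYX'',10,True),(''YxYX'',16,True),(''X'',28,True),(''XX'',11,True)]),
    (''xyxYxY'',[(''XYX'',10,True),(''XYXYX'',10,True),('''',13,True)]),
    (''xyyX'',[(''X'',11,True)]),
    (''Xyyx'',[(''x'',11,True)]),
    (''XyxxYxxxxxYXXYxxxYXXxxxYXX'',[(''XXYx'',10,True),(''XXXXXYXXYx'',10,True),(''xxYXXXXXYXXYx'',10,True),(''XXXYxxYXXXXXYXXYx'',10,True),(''XYXXXYxxYXXXXXYXXYx'',10,True),(''YXXYx'',18,True),(''XXYxxYxxYXXYx'',23,True),(''XXYx'',36,True),(''XYx'',31,True),(''x'',11,True),(''xxxx'',11,True),('''',20,True)]),
    (''XyxyXYxxxxYXXYxxxYXXxxxYXX'',[(''xYXYx'',10,True),(''XXXXYxYXYx'',10,True),(''xxYXXXXYxYXYx'',10,True),(''XXXYxxYXXXXYxYXYx'',10,True),(''XYXXXYxxYXXXXYxYXYx'',10,True),(''YxYXYx'',19,True),(''XXYxxYxxxYxYXYx'',23,True),(''x'',24,True),(''Yxx'',30,True),(''xYXXYXYxx'',11,True),(''XYXYxx'',23,True),(''xx'',17,True),('''',20,True)]),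
    (''yy'',[('''',11,True)]),
    (''xxyXXXxxyXXXxxyXXX'',[(''XX'',28,True),(''XXX'',11,True)]),
    (''xxyXXXyyxxxYXX'',[(''XXXYYxxxYXX'',10,True),(''xxxYXX'',11,True),(''XX'',11,True)]),
    (''xxyXXXxxyXXXyyxxxYXXxxxYXX'',[(''XXXYYxxxYxYXX'',10,True),(''XYXXXYYxxxYxYXX'',10,True),(''xxxYxYXX'',11,True),(''xYXX'',11,True),(''XX'',11,True)]),
    (''xxyXXXyxxyXXXyxxxYXXxxxYXXY'',[(''XXXYxxxYXXYxxxYXX'',10,True),(''XYXXXYxxxYXXYxxxYXX'',10,True),(''xxYXYXXXYxxxYXXYxxxYXX'',10,True),(''XXYxxxYXXYxxxYXX'',23,True),(''xxYXX'',45,True),(''XXYxxYxxYXX'',23,True),(''YXXYxxYxxYXX'',20,True),(''XX'',36,True),(''X'',31,True),(''xxxY'',11,True),('''',11,True)]),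
    (''yxxyXXXxxyXXXyxxxYXXYxxxYXX'',[(''XXXYxxxYxYXXY'',10,True),(''xxYXXXYxxxYxYXXY'',10,True),(''XXXYxxYXXXYxxxYxYXXY'',10,True),(''XXY'',28,True),(''XY'',50,True),('''',24,True),(''XXXYxxxYx'',32,True),(''YxxxYx'',19,True),(''YxxxYxxxYx'',19,True),(''xYx'',25,True),(''x'',28,True),('''',11,True)]),
    (''yxxyXXXxxyXXXxxyXXXY'',[(''xxxYxYxYXXY'',10,True),(''XXY'',28,True),(''XXXY'',11,True),('''',11,True)]),
    (''yxxyXXXyyxxxYXXY'',[(''XXXYYxxxYXXY'',10,True),(''xxYXXXYYxxxYXXY'',10,True),(''xxxYXXY'',11,True),(''XXY'',11,True),('''',11,True)]),
    (''yxxyXXXyxxyXXXYxxxYXXxxxYXX'',[(''xxxYXXYxxxYXXY'',10,True),(''XXXYxxxYXXYxxxYXXY'',10,True),(''XYXXXYxxxYXXYxxxYXXY'',10,True),(''XXYxxxYXXYxxxYXXY'',23,True),(''xxYXXY'',45,True),(''XXYxxYxxYXXY'',23,True),(''YXXYxxYxxYXXY'',20,True),(''XXY'',36,True),(''XY'',31,True),('''',11,True),(''xxx'',11,True)]),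
    (''xxyXXXxxyXXXyxxyXXXyxxxYXXxxxYXXYxxxYXX'',[(''XXXYxxxYXXYxxxYxYXX'',10,True),(''XYXXXYxxxYXXYxxxYxYXX'',10,True),(''xxYXYXXXYxxxYXXYxxxYxYXX'',10,True),(''XXXYxxYXYXXXYxxxYXXYxxxYxYXX'',10,True),(''XXYxxxYXXYxxxYxYXX'',23,True),(''XX'',28,True),(''xYXXX'',45,True),(''XXYxxYxYXXX'',23,True),(''YXXYxxYxYXXX'',20,True),(''XXX'',28,True),('''',19,True),(''xxx'',32,True),('''',34,True),(''xxxYXX'',11,True),(''XX'',11,True)]),
    (''xxyXXXxxyXXXyxxyXXXxxyXXXYxxxYXXY'',[(''xxxYxYXXYxxxYxYXX'',10,True),(''XXXYxxxYxYXXYxxxYxYXX'',10,True),(''xxYXXXYxxxYxYXXYxxxYxYXX'',10,True),(''XX'',28,True),(''XXYxxYXXX'',28,True),(''X'',50,True),(''XXXYxxYX'',32,True),(''YxxYX'',19,True),(''YxxxYxxYX'',19,True),(''YX'',25,True),(''X'',11,True),('''',11,True)]),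
    (''xxyXXXyxxyXXXxxyXXXyxxxYXXYxxxYXXxxxYXX'',[(''XXXYxxxYxYXXYxxxYXX'',10,True),(''xxYXXXYxxxYxYXXYxxxYXX'',10,True),(''XXXYxxYXXXYxxxYxYXXYxxxYXX'',10,True),(''XYXXXYxxYXXXYxxxYxYXXYxxxYXX'',10,True),(''XXYxxYXXXYxxxYxYXXYxxxYXX'',23,True),(''XXYxxxYXX'',28,True),(''XYxxxYXX'',50,True),(''xxxYXX'',24,True),(''YXX'',20,True),(''XXXYxxxYXXXYXX'',32,True),(''YxxxYXXXYXX'',19,True),(''YXX'',33,True),(''XXXYxYXX'',11,True),(''YxYXX'',16,True),(''XX'',28,True),(''XXX'',11,True)]),
    (''xxyXXXyxxyXXXxxyXXXxxyXXXYxxxYXX'',[(''xxxYxYxYXXYxxxYXX'',10,True),(''XXXYxxxYxYxYXXYxxxYXX'',10,True),(''XXYxxxYXX'',28,True),(''XXXYxxxYXX'',11,True),(''xxxYXX'',11,True),(''XX'',11,True)])]"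

definition consequences :: "word list" where
  "consequences = map (decw \<circ> fst) relator_certificate"

lemma elem_consequence: "k \<in> set consequences \<Longrightarrow> elem k = 0"
proof -
  let ?L = "map (\<lambda>(w, cs). (decw w, map (\<lambda>(g, i, s). (decw g, i, s)) cs)) relator_certificate"
  have "certified relator_list ?L"
    unfolding relator_certificate_def by code_simp
  moreover have "\<forall>k \<in> set relator_list. elem k = 0"
    unfolding relator_list_def by (auto intro!: elem_relator simp: relators_def)
  ultimately have "\<forall>x \<in> set ?L. elem (fst x) = 0"
    by (rule certified_trivial)
  moreover have "set consequences = fst ` set ?L"
    by (force simp: consequences_def split: prod.splits)
  ultimately show "k \<in> set consequences \<Longrightarrow> elem k = 0" by auto
qed

definition known_trivial :: "word \<Rightarrow> bool" where
  "known_trivial w \<longleftrightarrow> reduce w = [] \<or> (\<exists>k \<in> set consequences. reduce k = reduce w)"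

lemma elem_known_trivial: "known_trivial w \<Longrightarrow> elem w = 0"
  unfolding known_trivial_def by (metis elem_Nil elem_consequence elem_reduce)

section \<open>The subgroup N and its faithful action on 14 points\<close>

lemma act_append [simp]: "act (u @ v) p = act v (act u p)"
  by (induction u arbitrary: p) auto

definition all_letters :: "(bool \<times> gen) list" where
  "all_letters = [(b, c). b \<leftarrow> [True, False], c \<leftarrow> [GX, GY, GT]]"

lemma in_all_letters: "a \<in> set all_letters"
proof -
  obtain b c where a: "a = (b, c)" by (cases a)
  show ?thesis unfolding a all_letters_def by (cases b; cases c) simp_all
qed

lemma act_letter_bij:
  "\<forall>a \<in> set all_letters. \<forall>p \<in> set [1..<15]. act_letter a p \<in> set [1..<15]
     \<and> act_letter (inv_letter a) (act_letter a p) = p"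
  unfolding all_letters_def by code_simp

lemma act_letter_range: "p \<in> {1..14} \<Longrightarrow> act_letter a p \<in> {1..14}"
  using act_letter_bij in_all_letters[of a] by fastforce

lemma act_range: "p \<in> {1..14} \<Longrightarrow> act w p \<in> {1..14}"
proof (induction w arbitrary: p)
  case (Cons a w)
  from Cons.IH[OF act_letter_range[OF Cons.prems]] show ?case by simp
qed simp

lemma act_letter_inv_letter: "p \<in> {1..14} \<Longrightarrow> act_letter (inv_letter a) (act_letter a p) = p"
  using act_letter_bij in_all_letters[of a] by fastforce

lemma set_map_act_range: "set W \<subseteq> {1..14} \<Longrightarrow> set (map (act g) W) \<subseteq> {1..14}"
  by (simp only: set_map) (blast intro: act_range)

lemma act_winv: "p \<in> {1..14} \<Longrightarrow> act (winv w) (act w p) = p"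
proof (induction w arbitrary: p)
  case (Cons a w)
  from Cons.IH[OF act_letter_range[OF Cons.prems]] act_letter_inv_letter[OF Cons.prems]
  show ?case by simp
qed simp

lemma in_N_Nil [simp]: "in_N []"
  and in_N_Cons [simp]: "in_N (a # w) \<longleftrightarrow> snd a \<noteq> GT \<and> in_N w"
  and in_N_append [simp]: "in_N (u @ v) \<longleftrightarrow> in_N u \<and> in_N v"
  and in_N_winv [simp]: "in_N (winv w) \<longleftrightarrow> in_N w"
  by (auto simp: in_N_def winv_def inv_letter_def)

lemma in_N_wpow: "in_N w \<Longrightarrow> in_N (wpow w n)"
  by (induction n) (simp_all add: wpow_def)

definition perm_of :: "word \<Rightarrow> nat list" where
  "perm_of w = map (act w) [1..<15]"

definition perm_app :: "nat list \<Rightarrow> nat \<Rightarrow> nat" where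
  "perm_app \<sigma> p = \<sigma> ! (p - 1)"

definition perm_comp :: "nat list \<Rightarrow> nat list \<Rightarrow> nat list" where
  "perm_comp \<sigma> \<tau> = map (perm_app \<tau>) \<sigma>"

definition letter_perm :: "bool \<times> gen \<Rightarrow> nat list" where
  "letter_perm a = (case a of
      (False, GX) \<Rightarrow> [2, 3, 4, 5, 6, 7, 1, 9, 10, 11, 12, 13, 14, 8]
    | (True, GX) \<Rightarrow> [7, 1, 2, 3, 4, 5, 6, 14, 8, 9, 10, 11, 12, 13]
    | (_, GY) \<Rightarrow> [12, 3, 2, 11, 8, 13, 7, 5, 10, 9, 4, 1, 6, 14]
    | (_, GT) \<Rightarrow> [1..<15])"

text \<open>\<open>perm_word\<close> computes \<open>perm_of\<close> by composing tabulated letters, which evaluates much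
  faster than \<open>act\<close>.\<close>

definition perm_word :: "word \<Rightarrow> nat list" where
  "perm_word w = foldr (\<lambda>a \<sigma>. perm_comp (letter_perm a) \<sigma>) w [1..<15]"

lemma perm_app_perm_of: "p \<in> {1..14} \<Longrightarrow> perm_app (perm_of w) p = act w p"
  by (auto simp: perm_app_def perm_of_def)

lemma perm_of_eq_iff: "perm_of u = perm_of v \<longleftrightarrow> (\<forall>p \<in> {1..14}. act u p = act v p)"
  by (auto simp: perm_of_def)

lemma perm_of_append: "perm_of (u @ v) = perm_comp (perm_of u) (perm_of v)"
proof -
  have "act v (act u p) = perm_app (perm_of v) (act u p)" if "p \<in> set [1..<15]" for p
    using perm_app_perm_of[OF act_range, of p v u] that by auto
  then show ?thesis
    unfolding perm_comp_def perm_of_def[of "u @ v"] perm_of_def[of u] by simp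
qed

lemma letter_perm_eq: "letter_perm a = perm_of [a]"
proof -
  have "\<forall>a \<in> set all_letters. letter_perm a = perm_of [a]"
    unfolding all_letters_def by code_simp
  then show ?thesis using in_all_letters by blast
qed

lemma perm_word_eq [simp]: "perm_word w = perm_of w"
proof (induction w)
  case Nil
  show ?case by (simp add: perm_word_def perm_of_def map_idI)
next
  case (Cons a w)
  then show ?case
    using perm_of_append[of "[a]" w] by (simp add: perm_word_def letter_perm_eq)
qed

text \<open>Two words coincide if they agree both in G and as permutations; the permutation action does
  not factor through G (the letter t acts trivially), so both parts are kept.\<close>

definition coincide :: "word \<Rightarrow> word \<Rightarrow> bool" where
  "coincide u v \<longleftrightarrow> elem u = elem v \<and> perm_of u = perm_of v"

lemma coincide_refl: "coincide w w"
  by (simp add: coincide_def)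

lemma coincide_trans [trans]: "coincide u v \<Longrightarrow> coincide v w \<Longrightarrow> coincide u w"
  by (simp add: coincide_def)

lemma coincide_append: "coincide u v \<Longrightarrow> coincide u' v' \<Longrightarrow> coincide (u @ u') (v @ v')"
  by (simp add: coincide_def perm_of_append)

definition coincide_certified :: "word \<Rightarrow> word \<Rightarrow> bool" where
  "coincide_certified u v \<longleftrightarrow> known_trivial (u @ winv v) \<and> perm_of u = perm_of v"

lemma coincide_if_certified: "coincide_certified u v \<Longrightarrow> coincide u v"
  unfolding coincide_certified_def coincide_def
  using elem_known_trivial[of "u @ winv v"] by (simp add: add_eq_0_iff2)

text \<open>Coset enumeration of N over the stabiliser of the point 7, which is the alternating group
  of order 12 generated by \<open>y\<close> and \<open>c = x^2 y x^-3\<close>.  Index 0 of \<open>coset_rep\<close> is unused.\<close>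

definition coset_rep :: "nat \<Rightarrow> word" where
  "coset_rep p = decw ([[], ''x'', ''xx'', ''xxx'', ''XXX'', ''XX'', ''X'', [], ''XXy'', ''XXyx'',
     ''xyXX'', ''xyX'', ''xy'', ''Xy'', ''Xyx''] ! p)"

definition stab_gen :: "char \<Rightarrow> word" where
  "stab_gen c = (if c = CHR ''y'' then wy else decw ''xxyXXX'')"

definition stab_word :: "string \<Rightarrow> word" where
  "stab_word s = concat (map stab_gen s)"

definition stab_elt :: "nat \<Rightarrow> word" where
  "stab_elt i = stab_word ([[], ''c'', ''y'', ''cc'', ''cy'', ''yc'', ''ccy'', ''cyc'', ''ycc'', ''ycy'',
     ''ccyc'', ''cycc''] ! i)"

definition stab_mult :: "nat \<Rightarrow> char \<Rightarrow> nat" where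
  "stab_mult i c = (if c = CHR ''y'' then [2, 4, 0, 6, 1, 9, 3, 8, 7, 5, 11, 10] ! i
     else [1, 3, 5, 0, 7, 8, 10, 11, 2, 6, 9, 4] ! i)"

text \<open>Schreier data: \<open>coset_rep p \<cdot> x = stab_word (schreier_x p) \<cdot> coset_rep (x p)\<close>, likewise for y.\<close>

definition schreier_x :: "nat \<Rightarrow> string" where
  "schreier_x p = [[], [], [], [], [], [], [], [], [], ''cycc'', [], [], ''y'', [], ''ccyc''] ! p"

definition schreier_y :: "nat \<Rightarrow> string" where
  "schreier_y p = [[], [], ''c'', ''cc'', ''cc'', [], [], ''y'', [], ''cc'', ''c'', ''c'', [], [],
     ''ccyc''] ! p"

lemma coset_table:
  "list_all (\<lambda>p. set (schreier_x p) \<subseteq> set ''yc'' \<and> set (schreier_y p) \<subseteq> set ''yc''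
     \<and> coincide_certified (coset_rep p @ wx) (stab_word (schreier_x p) @ coset_rep (perm_x p))
     \<and> coincide_certified (coset_rep p @ wy) (stab_word (schreier_y p) @ coset_rep (perm_y p))) [1..<15]"
  unfolding coset_rep_def stab_word_def stab_gen_def schreier_x_def schreier_y_def by code_simp

lemma stab_table:
  "list_all (\<lambda>i. list_all (\<lambda>c. stab_mult i c < 12
     \<and> coincide_certified (stab_elt i @ stab_gen c) (stab_elt (stab_mult i c))) ''yc'') [0..<12]"
  unfolding stab_elt_def stab_word_def stab_gen_def stab_mult_def by code_simp

lemma list_all_points: "list_all P [1..<15] \<Longrightarrow> p \<in> {1..14} \<Longrightarrow> P p"
  by (auto simp: list_all_iff)

lemma coset_step:
  assumes "p \<in> {1..14}" and "a \<in> {(False, GX), (False, GY)}"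
  obtains s where "coincide (coset_rep p @ [a]) (stab_word s @ coset_rep (act_letter a p))"
    and "set s \<subseteq> set ''yc''"
proof -
  note row = list_all_points[OF coset_table assms(1)]
  from assms(2) consider "a = (False, GX)" | "a = (False, GY)" by blast
  then show thesis
  proof cases
    case 1
    with row show thesis
      by (intro that[of "schreier_x p"]) (auto simp: act_letter_def wx_def intro: coincide_if_certified)
  next
    case 2
    with row show thesis
      by (intro that[of "schreier_y p"]) (auto simp: act_letter_def wy_def intro: coincide_if_certified)
  qed
qed

lemma stab_word_step:
  assumes "i < 12" and "set s \<subseteq> set ''yc''"
  shows "\<exists>j < 12. coincide (stab_elt i @ stab_word s) (stab_elt j)"
  using assms
proof (induction s arbitrary: i rule: rev_induct)
  case Nil
  then show ?case by (auto simp: stab_word_def intro: coincide_refl)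
next
  case (snoc c s)
  then obtain j where j: "j < 12" "coincide (stab_elt i @ stab_word s) (stab_elt j)" by auto
  have c: "c \<in> set ''yc''" using snoc.prems(2) by simp
  have "stab_mult j c < 12 \<and> coincide_certified (stab_elt j @ stab_gen c) (stab_elt (stab_mult j c))"
    using stab_table j(1) c by (auto simp: list_all_iff)
  then have "coincide (stab_elt i @ stab_word (s @ [c])) (stab_elt (stab_mult j c))"
    using coincide_append[OF j(2) coincide_refl[of "stab_gen c"]]
    by (auto simp: stab_word_def intro: coincide_trans coincide_if_certified)
  then show ?case using \<open>stab_mult j c < 12 \<and> _\<close> by blast
qed

definition normal_form :: "word \<Rightarrow> nat \<Rightarrow> nat \<Rightarrow> bool" where
  "normal_form g i p \<longleftrightarrow> i < 12 \<and> p \<in> {1..14} \<and> coincide g (stab_elt i @ coset_rep p)"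

lemma normal_form_snoc_generator:
  assumes "normal_form g i p" and "a \<in> {(False, GX), (False, GY)}"
  shows "\<exists>j q. normal_form (g @ [a]) j q"
proof -
  from assms(1) have i: "i < 12" and p: "p \<in> {1..14}"
    and g: "coincide g (stab_elt i @ coset_rep p)" by (auto simp: normal_form_def)
  obtain s where s: "coincide (coset_rep p @ [a]) (stab_word s @ coset_rep (act_letter a p))"
    and "set s \<subseteq> set ''yc''" using coset_step[OF p assms(2)] .
  then obtain j where j: "j < 12" "coincide (stab_elt i @ stab_word s) (stab_elt j)"
    using stab_word_step[OF i] by blast
  have "coincide (g @ [a]) (stab_elt i @ coset_rep p @ [a])"
    using coincide_append[OF g coincide_refl] by simp
  also have "coincide \<dots> ((stab_elt i @ stab_word s) @ coset_rep (act_letter a p))"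
    using coincide_append[OF coincide_refl s] by simp
  also have "coincide \<dots> (stab_elt j @ coset_rep (act_letter a p))"
    using coincide_append[OF j(2) coincide_refl] .
  finally show ?thesis
    using j(1) act_letter_range[OF p, of a] unfolding normal_form_def by blast
qed

lemma inverse_generators:
  "coincide (wpow wx 6) [(True, GX)]" "coincide wy [(True, GY)]"
proof -
  have "coincide_certified (wpow wx 6) [(True, GX)]" "coincide_certified wy [(True, GY)]"
    unfolding wpow_def wx_def wy_def by code_simp+
  then show "coincide (wpow wx 6) [(True, GX)]" "coincide wy [(True, GY)]"
    by (simp_all add: coincide_if_certified)
qed

lemma wpow_replicate_wx: "wpow wx n = replicate n (False, GX)"
  by (induction n) (simp_all add: wpow_def wx_def)

lemma normal_form_coincide: "normal_form h i p \<Longrightarrow> coincide h h' \<Longrightarrow> normal_form h' i p"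
  by (auto simp: normal_form_def coincide_def)

lemma normal_form_exists: "in_N g \<Longrightarrow> \<exists>i p. normal_form g i p"
proof (induction g rule: rev_induct)
  case Nil
  have "normal_form [] 0 7"
    by (simp add: normal_form_def stab_elt_def stab_word_def coset_rep_def decw_def coincide_refl)
  then show ?case by blast
next
  case (snoc a g)
  then obtain i p where g: "normal_form g i p" and "snd a \<noteq> GT" by auto
  have x_power: "\<exists>j q. normal_form (g @ wpow wx n) j q" for n
  proof (induction n)
    case 0
    show ?case using g by (auto simp: wpow_def)
  next
    case (Suc n)
    then obtain j q where "normal_form (g @ wpow wx n) j q" by blast
    then have "\<exists>j q. normal_form ((g @ wpow wx n) @ [(False, GX)]) j q"
      by (rule normal_form_snoc_generator) simp
    moreover have "(g @ wpow wx n) @ [(False, GX)] = g @ wpow wx (Suc n)"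
      by (simp add: wpow_replicate_wx replicate_append_same)
    ultimately show ?case by simp
  qed
  obtain b c where a: "a = (b, c)" by (cases a)
  with \<open>snd a \<noteq> GT\<close> have "c = GX \<or> c = GY" by (cases c) auto
  then consider "a = (False, GX)" | "a = (False, GY)" | "a = (True, GX)" | "a = (True, GY)"
    using a by (cases b) auto
  then show ?case
  proof cases
    case 3
    obtain j q where "normal_form (g @ wpow wx 6) j q" using x_power by blast
    then show ?thesis
      using normal_form_coincide coincide_append[OF coincide_refl inverse_generators(1)] 3 by blast
  next
    case 4
    obtain j q where "normal_form (g @ wy) j q"
      using normal_form_snoc_generator[OF g, of "(False, GY)"] by (auto simp: wy_def)
    then show ?thesis
      using normal_form_coincide coincide_append[OF coincide_refl inverse_generators(2)] 4 by blast
  qed (use normal_form_snoc_generator[OF g] in auto)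
qed

lemma stab_elt_fixes_7: "list_all (\<lambda>i. act (stab_elt i) 7 = 7) [0..<12]"
  unfolding stab_elt_def stab_word_def stab_gen_def by code_simp

lemma stab_elt_perms_distinct: "distinct (map (\<lambda>i. perm_of (stab_elt i)) [0..<12])"
  unfolding stab_elt_def stab_word_def stab_gen_def by code_simp

lemma coset_rep_maps_7: "list_all (\<lambda>p. in_N (coset_rep p) \<and> act (coset_rep p) 7 = p) [1..<15]"
  unfolding coset_rep_def by code_simp

lemma normal_form_unique:
  assumes "normal_form u i p" "normal_form v j q" "perm_of u = perm_of v"
  shows "i = j" "p = q"
proof -
  from assms have i: "i < 12" and j: "j < 12" and p: "p \<in> {1..14}" and q: "q \<in> {1..14}"
    and perm: "perm_of (stab_elt i @ coset_rep p) = perm_of (stab_elt j @ coset_rep q)"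
    by (auto simp: normal_form_def coincide_def)
  have fix7: "act (stab_elt i) 7 = 7" "act (stab_elt j) 7 = 7"
    using stab_elt_fixes_7 i j by (auto simp: list_all_iff)
  show "p = q"
    using perm_of_eq_iff[THEN iffD1, OF perm, rule_format, of 7] fix7
      list_all_points[OF coset_rep_maps_7 p] list_all_points[OF coset_rep_maps_7 q] by simp
  have "act (stab_elt i) r = act (stab_elt j) r" if "r \<in> {1..14}" for r
    using act_winv[OF act_range[OF that], of "coset_rep p"]
      perm_of_eq_iff[THEN iffD1, OF perm, rule_format, OF that] \<open>p = q\<close>
    by (metis act_append act_range act_winv that)
  then have "perm_of (stab_elt i) = perm_of (stab_elt j)"
    by (simp add: perm_of_eq_iff)
  moreover have "inj_on (\<lambda>i. perm_of (stab_elt i)) {0..<12}"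
    using stab_elt_perms_distinct by (simp only: distinct_map set_upt)
  ultimately show "i = j"
    using i j by (auto dest: inj_onD)
qed

theorem elem_eq_if_perm_of_eq:
  assumes "in_N u" "in_N v" "perm_of u = perm_of v"
  shows "elem u = elem v"
proof -
  obtain i p j q where "normal_form u i p" "normal_form v j q"
    using normal_form_exists assms(1,2) by blast
  with normal_form_unique[OF this assms(3)] show ?thesis
    unfolding normal_form_def coincide_def by metis
qed

section \<open>The conjugates of t\<close>

definition t_elt :: "nat \<Rightarrow> gr" where
  "t_elt p = elem (wconj wt (coset_rep p))"

lemma t_commutes_stab_gen: "elem (stab_gen c) + elem wt = elem wt + elem (stab_gen c)"
proof -
  have "elem wt + elem wy = elem wy + elem wt"
    by (rule commute_if_elem_wcomm, rule elem_relator) (simp add: relators_def)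
  moreover
  let ?x2 = "elem (wpow wx 2)" and ?u = "elem (wy @ winv wx)"
  have "(- ?x2 + elem wt + ?x2) + ?u = ?u + (- ?x2 + elem wt + ?x2)"
    using commute_if_elem_wcomm[OF elem_relator, of "wconj wt (wpow wx 2)" "wy @ winv wx"]
    by (simp add: relators_def elem_wconj)
  then have "elem wt + (?x2 + ?u + - ?x2) = (?x2 + ?u + - ?x2) + elem wt"
    by (rule commute_conjugate)
  moreover have "decw ''xxyXXX'' = wpow wx 2 @ (wy @ winv wx) @ winv (wpow wx 2)"
    by (simp add: decw_def decode_def wpow_def wx_def wy_def inv_letter_def numeral_eq_Suc)
  then have "elem (decw ''xxyXXX'') = ?x2 + ?u + - ?x2"
    by (simp add: add.assoc)
  ultimately show ?thesis
    by (simp add: stab_gen_def)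
qed

lemma t_commutes_stab_word: "elem (stab_word s) + elem wt = elem wt + elem (stab_word s)"
proof (induction s)
  case (Cons c s)
  have "elem (stab_word (c # s)) + elem wt = elem (stab_gen c) + (elem (stab_word s) + elem wt)"
    by (simp add: stab_word_def add.assoc)
  also have "\<dots> = (elem (stab_gen c) + elem wt) + elem (stab_word s)"
    by (simp add: Cons.IH add.assoc)
  also have "\<dots> = elem wt + elem (stab_word (c # s))"
    by (simp add: t_commutes_stab_gen stab_word_def add.assoc)
  finally show ?case .
qed (simp add: stab_word_def)

lemma elem_conj_t: "in_N g \<Longrightarrow> elem (wconj wt g) = t_elt (act g 7)"
proof -
  assume "in_N g"
  then obtain i p where "normal_form g i p" using normal_form_exists by blast
  then have i: "i < 12" and p: "p \<in> {1..14}"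
    and g: "elem g = elem (stab_elt i) + elem (coset_rep p)"
    and perm: "perm_of g = perm_of (stab_elt i @ coset_rep p)"
    by (auto simp: normal_form_def coincide_def)
  have "act (stab_elt i) 7 = 7"
    using stab_elt_fixes_7 i by (auto simp: list_all_iff)
  then have "act g 7 = p"
    using perm_of_eq_iff[THEN iffD1, OF perm, rule_format, of 7] list_all_points[OF coset_rep_maps_7 p]
    by simp
  moreover
  let ?S = "elem (stab_elt i)" and ?R = "elem (coset_rep p)" and ?T = "elem wt"
  have "?T + ?S = ?S + ?T"
    by (simp add: stab_elt_def t_commutes_stab_word)
  then have "?T + (?S + x) = ?S + (?T + x)" for x
    by (metis add.assoc)
  then have "- (?S + ?R) + ?T + (?S + ?R) = - ?R + ?T + ?R"
    by (simp add: minus_add add.assoc)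
  ultimately show ?thesis
    by (simp add: elem_wconj g t_elt_def)
qed

lemma t_elt_conj: "in_N g \<Longrightarrow> p \<in> {1..14} \<Longrightarrow> - elem g + t_elt p + elem g = t_elt (act g p)"
proof -
  assume g: "in_N g" and p: "p \<in> {1..14}"
  have "- elem g + t_elt p + elem g = elem (wconj wt (coset_rep p @ g))"
    by (simp add: t_elt_def elem_wconj minus_add add.assoc)
  also have "\<dots> = t_elt (act g p)"
    using g list_all_points[OF coset_rep_maps_7 p] by (simp add: elem_conj_t)
  finally show ?thesis .
qed

lemma t_elt_involution: "t_elt p + t_elt p = 0"
proof -
  have "elem wt + elem wt = 0"
    using elem_relator[of "wpow wt 2"] by (simp add: relators_def wpow_def numeral_eq_Suc)
  then have "elem wt + (elem wt + x) = x" for x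
    by (metis add.assoc add_0_left)
  then show ?thesis
    by (simp add: t_elt_def elem_wconj add.assoc)
qed

lemma t_elt_minus [simp]: "- t_elt p = t_elt p"
  using t_elt_involution by (rule minus_unique)

lemma elem_is_t: "is_t i w \<Longrightarrow> elem w = t_elt i"
  by (auto simp: is_t_def elem_conj_t)

section \<open>Relations among the conjugates of t\<close>

definition t_prod :: "nat list \<Rightarrow> gr" where
  "t_prod W = sum_list (map t_elt W)"

lemma t_prod_Nil [simp]: "t_prod [] = 0"
  and t_prod_Cons [simp]: "t_prod (p # W) = t_elt p + t_prod W"
  and t_prod_append [simp]: "t_prod (U @ V) = t_prod U + t_prod V"
  by (simp_all add: t_prod_def)

lemma t_prod_rev: "t_prod (rev W) = - t_prod W"
  by (induction W) (simp_all add: minus_add)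

lemma t_prod_conj:
  "in_N g \<Longrightarrow> set W \<subseteq> {1..14} \<Longrightarrow> - elem g + t_prod W + elem g = t_prod (map (act g) W)"
proof (induction W)
  case (Cons p W)
  have "- elem g + t_prod (p # W) + elem g = (- elem g + t_elt p + elem g) + (- elem g + t_prod W + elem g)"
    by (simp add: add.assoc)
  with Cons show ?case by (simp add: t_elt_conj)
qed simp

fun t_orbit :: "word \<Rightarrow> nat \<Rightarrow> nat \<Rightarrow> nat list" where
  "t_orbit \<pi> a 0 = []"
| "t_orbit \<pi> a (Suc n) = act (wpow \<pi> n) a # t_orbit \<pi> a n"

lemma elem_power_times_t:
  assumes "in_N \<pi>" "a \<in> {1..14}"
  shows "elem (wpow (\<pi> @ wconj wt (coset_rep a)) n) = elem (wpow \<pi> n) + t_prod (t_orbit \<pi> a n)"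
proof (induction n)
  case (Suc n)
  have swap: "t_elt a + elem (wpow \<pi> n) = elem (wpow \<pi> n) + t_elt (act (wpow \<pi> n) a)"
    using t_elt_conj[OF in_N_wpow[OF assms(1)] assms(2), of n] by (metis add.assoc add_minus_cancel)
  have "elem (wpow (\<pi> @ wconj wt (coset_rep a)) (Suc n))
      = elem \<pi> + (t_elt a + elem (wpow \<pi> n)) + t_prod (t_orbit \<pi> a n)"
    using Suc by (simp add: wpow_def add.assoc flip: t_elt_def)
  also have "\<dots> = elem \<pi> + (elem (wpow \<pi> n) + t_elt (act (wpow \<pi> n) a)) + t_prod (t_orbit \<pi> a n)"
    by (simp only: swap)
  also have "\<dots> = elem (wpow \<pi> (Suc n)) + t_prod (t_orbit \<pi> a (Suc n))"
    by (simp add: wpow_def add.assoc)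
  finally show ?case .
qed (simp add: wpow_def)

text \<open>A t-fact \<open>(W, \<sigma>)\<close> records the relation \<open>t_prod W = elem \<pi>\<close> for some \<open>\<pi>\<close> in N with
  permutation \<open>\<sigma>\<close>; by faithfulness \<open>\<sigma>\<close> determines \<open>elem \<pi>\<close>.\<close>

type_synonym t_fact = "nat list \<times> nat list"

definition t_rel :: "t_fact \<Rightarrow> bool" where
  "t_rel f \<longleftrightarrow> set (fst f) \<subseteq> {1..14} \<and> (\<exists>\<pi>. in_N \<pi> \<and> perm_of \<pi> = snd f \<and> t_prod (fst f) = elem \<pi>)"

lemma t_rel_Nil: "t_rel ([], perm_of [])"
  unfolding t_rel_def by (intro conjI exI[of _ "[]"]) simp_all

lemma t_prod_eq_zero: "t_rel (W, perm_of []) \<Longrightarrow> t_prod W = 0"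
  unfolding t_rel_def using elem_eq_if_perm_of_eq[of _ "[]"] by fastforce

lemma t_rel_power_relator:
  assumes "in_N \<pi>" "a \<in> {1..14}" "elem (wpow (\<pi> @ wconj wt (coset_rep a)) n) = 0"
  shows "t_rel (t_orbit \<pi> a n, perm_of (winv (wpow \<pi> n)))"
proof -
  have "set (t_orbit \<pi> a n) \<subseteq> {1..14}"
    using act_range[OF assms(2)] by (induction n) auto
  moreover have "t_prod (t_orbit \<pi> a n) = elem (winv (wpow \<pi> n))"
    using assms(3) elem_power_times_t[OF assms(1,2), of n] by (simp add: add_eq_0_iff)
  ultimately show ?thesis
    unfolding t_rel_def by (intro conjI exI[of _ "winv (wpow \<pi> n)"]) (simp_all add: in_N_wpow assms(1))
qed

text \<open>The relators \<open>(y t^(x^2))^5\<close> and \<open>(x y x^2 t^x)^5\<close> as t-facts.\<close>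

definition base_t_facts :: "t_fact list" where
  "base_t_facts = [([2, 3, 2, 3, 2], [12, 3, 2, 11, 8, 13, 7, 5, 10, 9, 4, 1, 6, 14]),
     ([1, 12, 8, 5, 1], [12, 6, 11, 2, 1, 10, 14, 5, 13, 4, 9, 8, 3, 7])]"

lemma t_rel_base: "f \<in> set base_t_facts \<Longrightarrow> t_rel f"
proof -
  have reps: "coset_rep 2 = wpow wx 2" "coset_rep 1 = wx"
    by (simp_all add: coset_rep_def decw_def decode_def wpow_def wx_def numeral_eq_Suc)
  have "elem (wpow (wy @ wconj wt (coset_rep 2)) 5) = 0"
    by (rule elem_relator) (simp add: relators_def reps)
  then have "t_rel (t_orbit wy 2 5, perm_of (winv (wpow wy 5)))"
    by (rule t_rel_power_relator[rotated 2]) (simp_all add: wy_def)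
  moreover have "elem (wpow ((wx @ wy @ wpow wx 2) @ wconj wt (coset_rep 1)) 5) = 0"
    by (rule elem_relator) (use reps in \<open>simp add: relators_def\<close>)
  then have "t_rel (t_orbit (wx @ wy @ wpow wx 2) 1 5, perm_of (winv (wpow (wx @ wy @ wpow wx 2) 5)))"
    by (rule t_rel_power_relator[rotated 2]) (simp_all add: wx_def wy_def in_N_wpow)
  moreover have "t_orbit wy 2 5 = [2, 3, 2, 3, 2]"
    "perm_of (winv (wpow wy 5)) = [12, 3, 2, 11, 8, 13, 7, 5, 10, 9, 4, 1, 6, 14]"
    "t_orbit (wx @ wy @ wpow wx 2) 1 5 = [1, 12, 8, 5, 1]"
    "perm_of (winv (wpow (wx @ wy @ wpow wx 2) 5)) = [12, 6, 11, 2, 1, 10, 14, 5, 13, 4, 9, 8, 3, 7]"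
    unfolding wx_def wy_def wpow_def by code_simp+
  ultimately show "f \<in> set base_t_facts \<Longrightarrow> t_rel f"
    by (auto simp: base_t_facts_def)
qed

definition t_conj :: "word \<Rightarrow> t_fact \<Rightarrow> t_fact" where
  "t_conj g f = (let \<tau> = perm_word g in
     (map (perm_app \<tau>) (fst f), perm_comp (perm_word (winv g)) (perm_comp (snd f) \<tau>)))"

lemma t_rel_conj: "t_rel f \<Longrightarrow> in_N g \<Longrightarrow> t_rel (t_conj g f)"
proof -
  assume f: "t_rel f" and g: "in_N g"
  then obtain \<pi> where "in_N \<pi>" "perm_of \<pi> = snd f" "t_prod (fst f) = elem \<pi>"
    and range: "set (fst f) \<subseteq> {1..14}"
    by (auto simp: t_rel_def)
  moreover have map_eq: "map (perm_app (perm_of g)) (fst f) = map (act g) (fst f)"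
    using range by (auto simp: perm_app_perm_of)
  moreover have "set (map (act g) (fst f)) \<subseteq> {1..14}"
    using range by (rule set_map_act_range)
  ultimately show ?thesis
    using g unfolding t_rel_def t_conj_def Let_def perm_word_eq map_eq
    by (intro conjI exI[of _ "winv g @ \<pi> @ g"])
      (simp_all add: perm_of_append add.assoc flip: t_prod_conj)
qed

definition t_rot :: "nat \<Rightarrow> t_fact \<Rightarrow> t_fact" where
  "t_rot k f = (drop k (fst f) @ map (perm_app (snd f)) (take k (fst f)), snd f)"

lemma t_rel_rot: "t_rel f \<Longrightarrow> t_rel (t_rot k f)"
proof -
  assume "t_rel f"
  then obtain W \<pi> where f: "f = (W, perm_of \<pi>)" "in_N \<pi>" "t_prod W = elem \<pi>" "set W \<subseteq> {1..14}"
    by (cases f) (auto simp: t_rel_def)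
  have take: "set (take k W) \<subseteq> {1..14}" and drop: "set (drop k W) \<subseteq> {1..14}"
    using f(4) by (meson order_trans set_take_subset set_drop_subset)+
  then have map: "map (perm_app (perm_of \<pi>)) (take k W) = map (act \<pi>) (take k W)"
    by (auto simp: perm_app_perm_of)
  let ?A = "t_prod (take k W)" and ?B = "t_prod (drop k W)"
  have "?A + ?B = elem \<pi>"
    using f(3) by (metis append_take_drop_id t_prod_append)
  then have "?B = - ?A + elem \<pi>"
    by (metis minus_add_cancel)
  then have "?B + (- elem \<pi> + ?A + elem \<pi>) = elem \<pi>"
    by (simp add: add.assoc)
  then have "t_prod (drop k W @ map (act \<pi>) (take k W)) = elem \<pi>"
    by (simp add: t_prod_conj[OF f(2) take])
  moreover have "set (drop k W @ map (act \<pi>) (take k W)) \<subseteq> {1..14}"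
    using drop set_map_act_range[OF take] by simp
  ultimately show ?thesis
    using f(2) unfolding t_rel_def t_rot_def f(1) fst_conv snd_conv map by blast
qed

text \<open>Substitution: if \<open>l = S U\<close> is known and \<open>f\<close> begins with \<open>U^-1 = rev U\<close>, replace that prefix
  by \<open>S\<close>; the split point \<open>m\<close> is the length of \<open>S\<close>.\<close>

definition t_subst_ok :: "t_fact \<Rightarrow> nat \<Rightarrow> t_fact \<Rightarrow> bool" where
  "t_subst_ok l m f \<longleftrightarrow> take (length (fst l) - m) (fst f) = rev (drop m (fst l))"

definition t_subst :: "t_fact \<Rightarrow> nat \<Rightarrow> t_fact \<Rightarrow> t_fact" where
  "t_subst l m f = (take m (fst l) @ drop (length (fst l) - m) (fst f), perm_comp (snd l) (snd f))"

lemma t_rel_subst: "t_rel l \<Longrightarrow> t_rel f \<Longrightarrow> t_subst_ok l m f \<Longrightarrow> t_rel (t_subst l m f)"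
proof -
  assume "t_rel l" "t_rel f" and ok: "t_subst_ok l m f"
  then obtain L \<alpha> V \<rho> where l: "l = (L, perm_of \<alpha>)" "in_N \<alpha>" "t_prod L = elem \<alpha>" "set L \<subseteq> {1..14}"
    and f: "f = (V, perm_of \<rho>)" "in_N \<rho>" "t_prod V = elem \<rho>" "set V \<subseteq> {1..14}"
    by (cases l, cases f) (auto simp: t_rel_def)
  define S U Q where "S = take m L" and "U = drop m L" and "Q = drop (length L - m) V"
  have V: "V = rev U @ Q"
    using ok by (simp add: t_subst_ok_def l(1) f(1) U_def Q_def)
      (metis append_take_drop_id)
  have "t_prod S + t_prod U = elem \<alpha>"
    using l(3) by (metis S_def U_def append_take_drop_id t_prod_append)
  moreover have "- t_prod U + t_prod Q = elem \<rho>"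
    using f(3) V by (simp add: t_prod_rev)
  ultimately have "t_prod S + t_prod Q = elem \<alpha> + elem \<rho>"
    by (metis add.assoc add_minus_cancel)
  moreover have "set S \<subseteq> set L" "set Q \<subseteq> set V"
    by (simp_all add: S_def Q_def set_take_subset set_drop_subset)
  with l(4) f(4) have "set (S @ Q) \<subseteq> {1..14}"
    by auto
  ultimately show ?thesis
    using l f unfolding t_rel_def t_subst_def S_def Q_def
    by (intro conjI exI[of _ "\<alpha> @ \<rho>"]) (simp_all add: perm_of_append)
qed

datatype t_step = Conj string | Rot nat | Subst nat string nat

fun t_step_ok :: "t_step \<Rightarrow> t_fact \<Rightarrow> bool" where
  "t_step_ok (Conj g) f \<longleftrightarrow> in_N (decw g)"
| "t_step_ok (Rot k) f \<longleftrightarrow> True"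
| "t_step_ok (Subst b h m) f \<longleftrightarrow>
     b < length base_t_facts \<and> in_N (decw h) \<and> t_subst_ok (t_conj (decw h) (base_t_facts ! b)) m f"

fun t_apply :: "t_step \<Rightarrow> t_fact \<Rightarrow> t_fact" where
  "t_apply (Conj g) f = t_conj (decw g) f"
| "t_apply (Rot k) f = t_rot k f"
| "t_apply (Subst b h m) f = t_subst (t_conj (decw h) (base_t_facts ! b)) m f"

fun t_replay :: "t_step list \<Rightarrow> t_fact \<Rightarrow> t_fact option" where
  "t_replay [] f = Some f"
| "t_replay (s # ss) f = (if t_step_ok s f then t_replay ss (t_apply s f) else None)"

lemma t_rel_apply: "t_rel f \<Longrightarrow> t_step_ok s f \<Longrightarrow> t_rel (t_apply s f)"
proof (cases s)
  case (Subst b h m)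
  assume f: "t_rel f" and ok: "t_step_ok s f"
  with Subst have "t_rel (base_t_facts ! b)"
    by (simp add: t_rel_base)
  with f ok Subst show ?thesis
    by (simp add: t_rel_subst t_rel_conj)
qed (simp_all add: t_rel_conj t_rel_rot)

lemma t_rel_replay: "t_rel f \<Longrightarrow> t_replay ss f = Some g \<Longrightarrow> t_rel g"
proof (induction ss arbitrary: f)
  case (Cons s ss)
  then have "t_step_ok s f" "t_replay ss (t_apply s f) = Some g"
    by (simp_all split: if_splits)
  with Cons.prems(1) show ?case
    by (metis Cons.IH prod.collapse t_rel_apply)
qed simp

lemma t_prod_eq_zero_by_replay: "t_replay ss ([], perm_of []) = Some (W, perm_of []) \<Longrightarrow> t_prod W = 0"
  using t_rel_replay[OF t_rel_Nil] t_prod_eq_zero by metis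

definition pair_derivation :: "t_step list" where
  "pair_derivation = [
    Subst 1 ''xxyXXyx'' 5, Subst 0 ''X'' 3, Conj ''YxxxYxxx'', Rot 3, Conj ''XXYxx'',
    Subst 0 ''X'' 3, Conj ''YXXXYXX'', Rot 5, Conj ''xYxx'', Subst 1 ''Xyx'' 1, Conj ''X''
    ]"

definition line_derivation :: "t_step list" where
  "line_derivation = [
    Subst 1 ''xxyXXyx'' 5, Conj ''XYxxxYx'', Subst 1 ''Xyxxxyx'' 4, Rot 6,
    Conj ''XXXYxxxYYXXX'', Rot 5, Conj ''xxxYXXXY'', Subst 0 ''X'' 3, Conj ''YXXYXXX'', Rot 3,
    Conj ''YXXXYxxYX'', Subst 0 ''X'' 3, Conj ''YxxxY'', Rot 8, Conj ''xxY'', Subst 1 ''y'' 2,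
    Rot 6, Conj ''xxYXXYXXYxxx'', Rot 1, Conj ''YXXXYXX'', Subst 0 ''X'' 3, Conj ''XXYxxxY'',
    Rot 1, Conj ''X'', Subst 1 ''xxyXXyx'' 2, Conj ''YxxYxx'', Rot 7, Conj ''YxxYXXY'',
    Subst 0 ''X'' 3, Conj ''XXYxxxYXX'', Rot 1, Conj ''xxYxxxYX'', Subst 1 ''XXXyXXX'' 2, Rot 6,
    Conj ''YYxxxY'', Rot 6, Conj ''XYxxxYXXX'', Subst 0 ''X'' 3, Conj ''XXYxxxY'', Rot 8,
    Conj ''XYXXXY'', Subst 1 ''Xyxxx'' 2, Rot 5, Conj ''XXYxxxYXXXYXXXYxxYX'', Rot 3,
    Conj ''xYXXYxxYX'', Subst 0 ''X'' 3, Conj ''XYXXXYX'', Rot 9, Conj ''YXXYxxxYXX'',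
    Subst 1 ''xxyXXyxx'' 2, Rot 8, Conj ''XXYxxXXYxxxYXX'', Rot 3, Conj ''XXYXXXYX'',
    Subst 1 ''yxxyXXyx'' 3, Rot 9, Conj ''XXXYxYXXXYxxY'', Subst 0 ''XyXXXyxxy'' 2, Rot 7,
    Conj ''XXXYxxxY'', Rot 4, Conj ''XYxxY'', Subst 1 ''xxxyXX'' 3, Rot 6, Conj ''YXXXxYXXYx'',
    Rot 3, Conj ''YxxYxxx'', Subst 0 ''XXXyxxx'' 2, Rot 6, Conj ''XYxxYXxxYXXYX'', Rot 1,
    Conj ''xxYXXX'', Subst 1 ''xxyXXyx'' 2, Conj ''YXX'', Rot 1, Conj ''YxxxYxxx'',
    Subst 0 ''X'' 3, Conj ''xxxYXXX'', Rot 1, Conj ''xYxx'', Subst 1 ''Xyx'' 1,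
    Conj ''YXXXYXX'', Rot 5
    ]"

lemma t_pair_relation: "t_prod [7, 14, 7, 14] = 0"
  by (rule t_prod_eq_zero_by_replay[of pair_derivation]) code_simp

lemma t_line_relation: "t_prod [1, 8, 5, 12, 14, 7] = 0"
  by (rule t_prod_eq_zero_by_replay[of line_derivation]) code_simp

section \<open>The Fano plane\<close>

definition s_elt :: "nat \<Rightarrow> gr" where
  "s_elt p = t_elt p + t_elt (p + 7)"

text \<open>\<open>x\<close> acts on both halves of \<open>{1..14}\<close> as the same 7-cycle, so \<open>x^n\<close> shifts points by \<open>n\<close>.\<close>

definition shift :: "nat \<Rightarrow> nat \<Rightarrow> nat" where
  "shift n p = (p + n + 6) mod 7 + 1"

lemma shift_range: "shift n p \<in> {1..7}"
  by (simp add: shift_def)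

lemma shift_Suc: "shift 1 (shift n p) = shift (Suc n) p"
proof -
  have "(14 + x) mod 7 = x mod 7" for x :: nat
    using mod_add_left_eq[of 14 7 x] by simp
  then show ?thesis by (simp add: shift_def mod_add_right_eq)
qed

lemma shift_table:
  "\<forall>p \<in> set [1..<8]. shift 0 p = p \<and> shift p 7 = p
     \<and> perm_x p = shift 1 p \<and> perm_x (p + 7) = shift 1 p + 7"
  unfolding shift_def perm_x_def by code_simp

lemma points_7: "p \<in> {1..7} \<longleftrightarrow> p \<in> set [1..<8]"
  by auto

lemma act_wx_power:
  assumes "p \<in> {1..7}"
  shows "act (wpow wx n) p = shift n p \<and> act (wpow wx n) (p + 7) = shift n p + 7"
proof (induction n)
  case 0
  show ?case using shift_table assms by (simp add: wpow_def points_7)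
next
  case (Suc n)
  have "wpow wx (Suc n) = wpow wx n @ wx"
    unfolding wpow_replicate_wx by (simp add: wx_def replicate_append_same)
  moreover have "shift n p \<in> set [1..<8]"
    using shift_range[of n p] by (simp only: points_7)
  ultimately show ?case
    using Suc shift_table shift_Suc[of n p] by (simp add: wx_def act_letter_def)
qed

lemma t_prod_conj_zero: "t_prod W = 0 \<Longrightarrow> in_N g \<Longrightarrow> set W \<subseteq> {1..14} \<Longrightarrow> t_prod (map (act g) W) = 0"
  using t_prod_conj by fastforce

lemma in_N_wpow_wx: "in_N (wpow wx n)"
  by (rule in_N_wpow) (simp add: wx_def)

lemma t_pair_commute: "p \<in> {1..7} \<Longrightarrow> t_elt p + t_elt (p + 7) = t_elt (p + 7) + t_elt p"
proof -
  assume p: "p \<in> {1..7}"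
  have "shift p 7 = p" using shift_table p by (simp add: points_7)
  then have map: "map (act (wpow wx p)) [7, 14, 7, 14] = [p, p + 7, p, p + 7]"
    using act_wx_power[of 7 p] by simp
  have "t_prod (map (act (wpow wx p)) [7, 14, 7, 14]) = 0"
    by (rule t_prod_conj_zero[OF t_pair_relation in_N_wpow_wx]) simp
  then have "t_prod [p, p + 7, p, p + 7] = 0"
    unfolding map .
  then show ?thesis
    by (intro commute_if_involutions t_elt_involution) (simp add: add.assoc)
qed

lemma s_elt_involution: "p \<in> {1..7} \<Longrightarrow> s_elt p + s_elt p = 0"
  unfolding s_elt_def by (intro sum_commuting_involutions t_elt_involution t_pair_commute)

lemma s_elt_shifted_line: "s_elt (shift n 1) + s_elt (shift n 5) = s_elt (shift n 7)"
proof -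
  let ?a = "shift n 1" and ?b = "shift n 5" and ?c = "shift n 7"
  have map: "map (act (wpow wx n)) [1, 8, 5, 12, 14, 7] = [?a, ?a + 7, ?b, ?b + 7, ?c + 7, ?c]"
    using act_wx_power[of 1 n] act_wx_power[of 5 n] act_wx_power[of 7 n] by simp
  have "t_prod (map (act (wpow wx n)) [1, 8, 5, 12, 14, 7]) = 0"
    by (rule t_prod_conj_zero[OF t_line_relation in_N_wpow_wx]) simp
  then have "t_prod [?a, ?a + 7, ?b, ?b + 7, ?c + 7, ?c] = 0"
    unfolding map .
  then have "s_elt ?a + s_elt ?b + s_elt ?c = 0"
    using t_pair_commute[OF shift_range[of n 7]] by (simp add: s_elt_def add.assoc)
  moreover have "s_elt ?a + s_elt ?b = (s_elt ?a + s_elt ?b + s_elt ?c) + s_elt ?c"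
    using s_elt_involution[OF shift_range[of n 7]] by (simp add: add.assoc)
  ultimately show ?thesis by simp
qed

lemma fano_lines_shift: "\<forall>L \<in> fano_lines. \<exists>n \<in> set [0..<7]. L = {shift n 7, shift n 1, shift n 5}"
  unfolding fano_lines_def shift_def by code_simp

lemma ternary_relation_on_triple:
  assumes swap12: "\<And>x y z. R x y z \<Longrightarrow> R y x z" and swap23: "\<And>x y z. R x y z \<Longrightarrow> R x z y"
    and "R p q r" "{a, b, c} \<subseteq> {p, q, r}" "distinct [a, b, c]"
  shows "R a b c"
proof -
  have "R p q r" "R q p r" "R p r q" "R q r p" "R r p q" "R r q p"
    using assms(3) swap12 swap23 by blast+
  with assms(4,5) show ?thesis by auto
qed

lemma s_elt_collinear:
  assumes "L \<in> fano_lines" "{a, b, c} \<subseteq> L" "distinct [a, b, c]"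
  shows "s_elt a + s_elt b = s_elt c"
proof -
  let ?R = "\<lambda>x y z. x \<in> {1..7} \<and> y \<in> {1..7} \<and> z \<in> {1..7} \<and> s_elt x + s_elt y = s_elt z"
  obtain n where L: "L = {shift n 7, shift n 1, shift n 5}"
    using assms(1) fano_lines_shift by blast
  have base: "?R (shift n 1) (shift n 5) (shift n 7)"
    using shift_range s_elt_shifted_line by blast
  have sym: "\<And>x y z. ?R x y z \<Longrightarrow> ?R y x z" "\<And>x y z. ?R x y z \<Longrightarrow> ?R x z y"
    using involutions_relation_sym[OF s_elt_involution s_elt_involution s_elt_involution] by blast+
  have "{a, b, c} \<subseteq> {shift n 1, shift n 5, shift n 7}"
    using assms(2) L by auto
  from ternary_relation_on_triple[where R = ?R, OF sym base this assms(3)] show ?thesis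
    by simp
qed

lemma fano_line_through: "\<forall>a \<in> {1..7}. \<forall>b \<in> {1..7}. \<exists>L \<in> fano_lines. {a, b} \<subseteq> L"
  unfolding fano_lines_def by code_simp

lemma fano_lines_meet: "\<forall>L \<in> fano_lines. \<forall>M \<in> fano_lines. L \<inter> M \<noteq> {}"
  unfolding fano_lines_def by code_simp

theorem lemma3p3:
  fixes i j k l :: nat
    and wi ui wj uj wk uk wl ul :: word
  assumes "i \<in> {1..7}" "j \<in> {1..7}" "k \<in> {1..7}" "l \<in> {1..7}"
    and "distinct [i, j, k, l]"
    and "\<not> collinear i j k" "\<not> collinear i j l" "\<not> collinear i k l" "\<not> collinear j k l"
    and "is_t i wi" "is_t (i + 7) ui" "is_t j wj" "is_t (j + 7) uj"
    and "is_t k wk" "is_t (k + 7) uk" "is_t l wl" "is_t (l + 7) ul"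
  shows "G_eq (wi @ ui @ wj @ uj) (wk @ uk @ wl @ ul)"
proof -
  obtain L M where L: "L \<in> fano_lines" "{i, j} \<subseteq> L" and M: "M \<in> fano_lines" "{k, l} \<subseteq> M"
    using fano_line_through assms(1-4) by meson
  then obtain c where c: "c \<in> L" "c \<in> M" using fano_lines_meet by blast
  \<comment> \<open>\<open>c\<close> is the diagonal point of the quadrangle: it differs from \<open>i, j, k, l\<close> by non-collinearity\<close>
  have "c \<noteq> i" "c \<noteq> j" "c \<noteq> k" "c \<noteq> l"
    using assms(6-9) L M c by (auto simp: collinear_def)
  then have "s_elt i + s_elt j = s_elt c" "s_elt k + s_elt l = s_elt c"
    using L(2) M(2) c assms(5) by (auto intro: s_elt_collinear[OF L(1)] s_elt_collinear[OF M(1)])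
  then show ?thesis
    using assms(10-17) by (simp add: elem_eq_iff[symmetric] elem_is_t s_elt_def add.assoc)
qed

end
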